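(* For every prime $p\ge3$, the polynomials $P_{1,p}(z)=\sum_{n=0}^{p-1}\left(\binom{2n}{n}^2\bmod p\right)z^n$ and $P_{2,p}(z)=\sum_{n=0}^{p-1}\left(\frac{-1}{2n-1}\binom{2n}{n}^2\bmod p\right)z^n$ in $\mathbb{F}_p[z]$ are coprime.
   Context: The coefficients $\frac{-1}{2n-1}\binom{2n}{n}^2$ are integers, so their reduction mod $p$ makes sense. *)

theory Defs
  imports "Berlekamp_Zassenhaus.Finite_Field" "HOL-Computational_Algebra.Polynomial"
begin

text \<open>Integer coefficients. a1 n = binom(2n,n)^2; a2 n = -binom(2n,n)^2/(2n-1),
  which is an exact integer division (for n = 0 it equals 1).\<close>
definition a1 :: "nat \<Rightarrow> int" where
  "a1 n = (int ((2*n) choose n))^2"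

definition a2 :: "nat \<Rightarrow> int" where
  "a2 n = - ((int ((2*n) choose n))^2 div (2 * int n - 1))"

definition P1 :: "'p::prime_card mod_ring poly" where
  "P1 = (\<Sum>n<CARD('p). monom (of_int (a1 n)) n)"

definition P2 :: "'p::prime_card mod_ring poly" where
  "P2 = (\<Sum>n<CARD('p). monom (of_int (a2 n)) n)"

end

theory Submission imports Defs begin

(* Write x for the variable and D f = (1 - 16x) x f'.  Modulo p = 2m + 1 one has
   binom(2n,n) = (-4)^n binom(m,n), so binom(2n,n)^2 vanishes for m < n < p, and by Vandermonde
   P1(1/16) = binom(2m,m), which is nonzero mod p.  The recurrences of the central binomial
   coefficients give 2 x P2' = P2 - P1 and (1 - 16x)(P1 + 2 x P1') = P2.  Hence 2 D P1 and
   2 D P2 lie in the ideal (P1, P2), so g = gcd P1 P2 divides D g.  Since P1(0) = 1 and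
   P1(1/16) is nonzero, g is coprime to x (1 - 16x), hence g divides g'.  As deg g < p, this
   forces g to be constant. *)

lemma central_binomial_Suc:
  "Suc n * (2 * Suc n choose Suc n) = 2 * (2 * n + 1) * (2 * n choose n)"
  by (metis Suc_eq_plus1 Suc_times_binomial Suc_times_binomial_eq add_Suc
      add_mult_distrib binomial_Suc_n choose_mult_lemma left_add_twice mult_2)

lemma central_binomial_int:
  assumes "n > 0"
  shows "int n * int (2 * n choose n) = 2 * (2 * int n - 1) * int (2 * (n - 1) choose (n - 1))"
proof -
  obtain k where k: "n = Suc k" using assms by (cases n) auto
  have "int (Suc k * (2 * Suc k choose Suc k)) = int (2 * (2 * k + 1) * (2 * k choose k))"
    using central_binomial_Suc by presburger
  thus ?thesis unfolding k by (simp add: algebra_simps)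
qed

lemma a2_mult: "(2 * int n - 1) * a2 n = - a1 n"
proof (cases "n = 0")
  case True thus ?thesis by (simp add: a1_def a2_def)
next
  case False
  define d where "d = 2 * int n - 1"
  define C where "C = int (2 * n choose n)"
  have "coprime d (int n)"
  proof (rule coprimeI)
    fix x assume "x dvd d" "x dvd int n"
    hence "x dvd 2 * int n - d" by simp
    thus "is_unit x" unfolding d_def by simp
  qed
  moreover have "int n * C = d * (2 * int (2 * (n - 1) choose (n - 1)))"
    using central_binomial_int[of n] False unfolding C_def d_def by (simp add: algebra_simps)
  hence "d dvd int n * C" by simp
  ultimately have "d dvd C^2" by (simp add: coprime_dvd_mult_right_iff power2_eq_square)
  hence "d * (C^2 div d) = C^2" by simp
  thus ?thesis unfolding a1_def a2_def C_def[symmetric] d_def[symmetric] by simp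
qed

lemma a2_recurrence:
  assumes "n > 0"
  shows "(2 * int n + 1) * a1 n - 16 * (2 * int n - 1) * a1 (n - 1) = a2 n"
proof -
  define d where "d = 2 * int n - 1"
  define C where "C = int (2 * n choose n)"
  define c where "c = int (2 * (n - 1) choose (n - 1))"
  have "int n * C = 2 * d * c"
    using central_binomial_int[OF assms] unfolding C_def d_def c_def by (simp add: algebra_simps)
  hence square: "(int n)^2 * C^2 = 4 * d^2 * c^2"
    by (metis power_mult_distrib power2_eq_square mult.assoc mult.commute numeral_Bit0_eq_double)
  have "d * a2 n = - (C^2)" using a2_mult[of n] unfolding d_def C_def a1_def by simp
  hence "d * (int n)^2 * a2 n = - ((int n)^2 * C^2)" by (metis mult.assoc mult.commute mult_minus_right)
  also have "\<dots> = d * (2 * int n + 1) * ((int n)^2 * C^2) - 16 * d^2 * (int n)^2 * c^2"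
    unfolding square d_def by (simp add: algebra_simps power2_eq_square)
  also have "\<dots> = d * (int n)^2 * ((2 * int n + 1) * C^2 - 16 * d * c^2)"
    by (simp add: algebra_simps power2_eq_square)
  finally have "d * (int n)^2 * a2 n = d * (int n)^2 * ((2 * int n + 1) * C^2 - 16 * d * c^2)" .
  moreover have "d \<noteq> 0" "int n \<noteq> 0" using assms unfolding d_def by presburger+
  ultimately have "(2 * int n + 1) * C^2 - 16 * d * c^2 = a2 n" by simp
  thus ?thesis unfolding a1_def C_def c_def d_def using assms by simp
qed

lemma of_nat_central_binomial_char:
  assumes char: "CHAR('a::idom) = 2 * m + 1" and "n < CHAR('a)"
  shows "(of_nat (2 * n choose n) :: 'a) = (-4)^n * of_nat (m choose n)"
  using \<open>n < CHAR('a)\<close>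
proof (induction n)
  case 0 thus ?case by simp
next
  case (Suc k)
  have IH: "(of_nat (2 * k choose k) :: 'a) = (-4)^k * of_nat (m choose k)"
    using Suc by simp
  have "\<not> CHAR('a) dvd Suc k" using Suc.prems by (auto dest: dvd_imp_le)
  hence Suc_k_nonzero: "(of_nat (Suc k) :: 'a) \<noteq> 0" using of_nat_eq_0_iff_char_dvd by blast
  have "(of_nat (Suc k * (2 * Suc k choose Suc k)) :: 'a) = of_nat (2 * (2 * k + 1) * (2 * k choose k))"
    by (simp only: central_binomial_Suc)
  hence lhs: "(of_nat (Suc k) :: 'a) * of_nat (2 * Suc k choose Suc k)
      = 2 * (2 * of_nat k + 1) * of_nat (2 * k choose k)"
    by (simp only: of_nat_mult of_nat_add of_nat_numeral of_nat_1)
  have "(of_nat (Suc k * (m choose Suc k)) :: 'a) = of_nat ((m - k) * (m choose k))"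
    by (metis binomial_absorb_comp binomial_absorption)
  hence absorb: "(of_nat (Suc k) :: 'a) * of_nat (m choose Suc k) = of_nat (m - k) * of_nat (m choose k)"
    by (simp only: of_nat_mult)
  have key: "(-4) * (of_nat (m - k) * of_nat (m choose k)) = 2 * (2 * of_nat k + 1) * (of_nat (m choose k) :: 'a)"
  proof (cases "k \<le> m")
    case True
    have "(of_nat (2 * m + 1) :: 'a) = 0" unfolding char[symmetric] by (simp add: of_nat_eq_0_iff_char_dvd)
    moreover have "(-4) * (of_nat m - of_nat k) = 2 * (2 * of_nat k + 1) - 2 * (of_nat (2 * m + 1) :: 'a)"
      by (simp add: algebra_simps)
    ultimately have "(-4) * (of_nat m - of_nat k) = 2 * (2 * of_nat k + 1 :: 'a)" by simp
    thus ?thesis using True by (simp add: of_nat_diff mult.assoc[symmetric])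
  qed (simp add: binomial_eq_0)
  have "(of_nat (Suc k) :: 'a) * ((-4)^Suc k * of_nat (m choose Suc k))
      = (-4)^k * ((-4) * (of_nat (Suc k) * of_nat (m choose Suc k)))"
    by (simp add: algebra_simps)
  also have "\<dots> = (-4)^k * (2 * (2 * of_nat k + 1) * of_nat (m choose k))"
    unfolding absorb key ..
  also have "\<dots> = 2 * (2 * of_nat k + 1) * ((-4)^k * of_nat (m choose k))"
    by (simp add: algebra_simps)
  also have "\<dots> = of_nat (Suc k) * of_nat (2 * Suc k choose Suc k)"
    unfolding lhs IH ..
  finally show ?case using Suc_k_nonzero mult_left_cancel by metis
qed

lemma pderiv_eq_0_if_dvd_pderiv:
  fixes f :: "'a::idom poly"
  assumes "f dvd pderiv f"
  shows "pderiv f = 0"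
proof (rule ccontr)
  assume nonzero: "pderiv f \<noteq> 0"
  hence "degree f \<noteq> 0" by (metis degree_eq_zeroE pderiv_singleton)
  moreover have "degree f \<le> degree (pderiv f)" using assms nonzero by (rule dvd_imp_degree_le)
  moreover have "degree (pderiv f) \<le> degree f - 1"
    by (rule degree_le) (auto simp: coeff_pderiv coeff_eq_0)
  ultimately show False by linarith
qed

lemma char_dvd_degree_if_pderiv_eq_0:
  fixes f :: "'a::idom poly"
  assumes "pderiv f = 0"
  shows "CHAR('a) dvd degree f"
proof (cases "degree f")
  case (Suc d)
  hence "of_nat (Suc d) * lead_coeff f = 0" using assms coeff_pderiv[of f d] by simp
  moreover have "f \<noteq> 0" using Suc by auto
  ultimately have "of_nat (Suc d) = (0 :: 'a)" by simp
  thus ?thesis using Suc of_nat_eq_0_iff_char_dvd by metis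
qed simp

lemma gcd_dvd_mult_pderiv_gcd:
  fixes f g h :: "'a::field_gcd poly"
  assumes "gcd f g dvd h * pderiv f" and "gcd f g dvd h * pderiv g"
  shows "gcd f g dvd h * pderiv (gcd f g)"
proof -
  obtain s t where bezout: "s * f + t * g = gcd f g"
    using bezout_coefficients_fst_snd by blast
  have "h * pderiv (gcd f g)
      = s * (h * pderiv f) + t * (h * pderiv g) + (h * pderiv s) * f + (h * pderiv t) * g"
    unfolding bezout[symmetric] by (simp add: pderiv_add pderiv_mult algebra_simps)
  also have "gcd f g dvd \<dots>" using assms by simp
  finally show ?thesis .
qed

lemma coprime_linear_poly_if_poly_nonzero:
  fixes f :: "'a::field_gcd poly"
  assumes "b \<noteq> 0" and "poly f (- a / b) \<noteq> 0"
  shows "coprime f [:a, b:]"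
proof -
  have "\<not> [:a, b:] dvd f"
  proof
    assume "[:a, b:] dvd f"
    then obtain k where "f = [:a, b:] * k" by blast
    thus False using assms by simp
  qed
  thus ?thesis using prime_elem_imp_coprime[OF prime_elem_linear_field_poly[OF assms(1)]]
    by (simp add: coprime_commute)
qed

lemma coeff_x_mult_pderiv: "coeff ([:0, 1:] * pderiv f) n = of_nat n * coeff f n"
  by (cases n) (simp_all add: coeff_pderiv)

lemma coeff_linear_mult:
  "coeff ([:a, b:] * f) n = a * coeff f n + (if n = 0 then 0 else b * coeff f (n - 1))"
  by (cases n) simp_all

lemma coeff_P1: "coeff (P1 :: 'p::prime_card mod_ring poly) n = (if n < CARD('p) then of_int (a1 n) else 0)"
  unfolding P1_def by (simp add: coeff_sum coeff_monom)

lemma coeff_P2: "coeff (P2 :: 'p::prime_card mod_ring poly) n = (if n < CARD('p) then of_int (a2 n) else 0)"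
  unfolding P2_def by (simp add: coeff_sum coeff_monom)

lemma odd_CARD_prime_card: "CARD('p::prime_card) \<ge> 3 \<Longrightarrow> odd CARD('p)"
  using prime_card[where 'a='p] prime_odd_nat by fastforce

lemma two_mod_ring_nonzero:
  assumes "CARD('p::prime_card) \<ge> 3"
  shows "(2 :: 'p mod_ring) \<noteq> 0"
proof
  assume "(2 :: 'p mod_ring) = 0"
  hence "CARD('p) dvd 2" using of_nat_0_mod_ring_dvd[of 2, where 'a='p] by simp
  thus False using assms dvd_imp_le[of "CARD('p)" 2] by linarith
qed

lemma sixteen_mod_ring_nonzero:
  assumes "CARD('p::prime_card) \<ge> 3"
  shows "(16 :: 'p mod_ring) \<noteq> 0"
proof -
  have "(2 :: 'p mod_ring)^4 \<noteq> 0" using two_mod_ring_nonzero[OF assms] by (rule power_not_zero)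
  thus ?thesis by simp
qed

lemma of_int_a1_mod_ring:
  assumes "CARD('p::prime_card) \<ge> 3" and "n < CARD('p)"
  shows "(of_int (a1 n) :: 'p mod_ring) = 16^n * of_nat ((CARD('p) div 2 choose n)^2)"
proof -
  have "CHAR('p mod_ring) = 2 * (CARD('p) div 2) + 1"
    using odd_CARD_prime_card[OF assms(1)] by simp
  from of_nat_central_binomial_char[OF this] assms(2)
  have "(of_nat (2 * n choose n) :: 'p mod_ring) = (-4)^n * of_nat (CARD('p) div 2 choose n)"
    by simp
  thus ?thesis unfolding a1_def by (simp add: power_mult_distrib power2_eq_square flip: power_mult_distrib)
qed

lemma P2_pderiv_eq: "smult 2 ([:0, 1:] * pderiv (P2 :: 'p::prime_card mod_ring poly)) = P2 - P1"
proof (rule poly_eqI)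
  fix n
  have "(2 * of_nat n - 1) * (of_int (a2 n) :: 'p mod_ring) = - of_int (a1 n)"
    using arg_cong[OF a2_mult[of n], of "of_int :: int \<Rightarrow> 'p mod_ring"] by simp
  thus "coeff (smult 2 ([:0, 1:] * pderiv P2)) n = coeff (P2 - P1 :: 'p mod_ring poly) n"
    unfolding coeff_smult coeff_x_mult_pderiv coeff_diff by (auto simp: coeff_P1 coeff_P2 algebra_simps)
qed

lemma P1_pderiv_eq:
  assumes "CARD('p::prime_card) \<ge> 3"
  shows "[:1, -16:] * (P1 + smult 2 ([:0, 1:] * pderiv P1)) = (P2 :: 'p mod_ring poly)"
proof (rule poly_eqI)
  fix n
  define p where "p = CARD('p)"
  have coeff_Q: "coeff (P1 + smult 2 ([:0, 1:] * pderiv P1)) k = (2 * of_nat k + 1) * coeff (P1 :: 'p mod_ring poly) k"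
    for k unfolding coeff_add coeff_smult coeff_x_mult_pderiv by (simp add: algebra_simps)
  have "(of_int (a1 (p - 1)) :: 'p mod_ring) = 0"
    using of_int_a1_mod_ring[OF assms, of "p - 1"] assms by (simp add: p_def binomial_eq_0)
  moreover have "(2 * of_nat n + 1) * (of_int (a1 n) :: 'p mod_ring) - 16 * (2 * of_nat n - 1) * of_int (a1 (n - 1))
      = of_int (a2 n)" if "n > 0"
    using arg_cong[OF a2_recurrence[OF that], of "of_int :: int \<Rightarrow> 'p mod_ring"] by simp
  moreover have "(of_nat (n - 1) :: 'p mod_ring) = of_nat n - 1" if "n > 0" using that by simp
  ultimately show "coeff ([:1, -16:] * (P1 + smult 2 ([:0, 1:] * pderiv P1))) n = coeff (P2 :: 'p mod_ring poly) n"
    unfolding coeff_linear_mult coeff_Q using assms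
    by (cases "n = 0"; cases "n < p"; cases "n = p")
       (auto simp: coeff_P1 coeff_P2 a1_def a2_def p_def algebra_simps)
qed

lemma poly_P1_0: "poly (P1 :: 'p::prime_card mod_ring poly) 0 = 1"
  by (simp add: poly_0_coeff_0 coeff_P1 a1_def)

lemma degree_P1_less: "degree (P1 :: 'p::prime_card mod_ring poly) < CARD('p)"
proof -
  have "degree (P1 :: 'p mod_ring poly) \<le> CARD('p) - 1" by (rule degree_le) (auto simp: coeff_P1)
  moreover have "CARD('p) > 0" by simp
  ultimately show ?thesis by linarith
qed

lemma poly_P1_one_sixteenth:
  assumes "CARD('p::prime_card) \<ge> 3"
  shows "poly (P1 :: 'p mod_ring poly) (1 / 16) = of_nat (2 * (CARD('p) div 2) choose (CARD('p) div 2))"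
proof -
  define m where "m = CARD('p) div 2"
  have p: "CARD('p) = 2 * m + 1" using odd_CARD_prime_card[OF assms] unfolding m_def by simp
  have "(16 :: 'p mod_ring) * (1 / 16) = 1" using sixteen_mod_ring_nonzero[OF assms] by simp
  hence cancel: "(16 :: 'p mod_ring)^n * (1 / 16)^n = 1" for n by (simp flip: power_mult_distrib)
  have "(of_int (a1 n) :: 'p mod_ring) * (1 / 16)^n = of_nat ((m choose n)^2)" if "n < CARD('p)" for n
    unfolding of_int_a1_mod_ring[OF assms that] m_def[symmetric] using cancel by (simp add: ac_simps)
  hence "poly (P1 :: 'p mod_ring poly) (1 / 16) = of_nat (\<Sum>n<CARD('p). (m choose n)^2)"
    unfolding P1_def by (simp add: poly_sum poly_monom)
  also have "(\<Sum>n<CARD('p). (m choose n)^2) = (\<Sum>n\<le>m. (m choose n)^2)"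
    by (rule sum.mono_neutral_right) (auto simp: p binomial_eq_0)
  also have "\<dots> = 2 * m choose m" by (rule choose_square_sum)
  finally show ?thesis unfolding m_def .
qed

lemma poly_P1_one_sixteenth_nonzero:
  assumes "CARD('p::prime_card) \<ge> 3"
  shows "poly (P1 :: 'p mod_ring poly) (1 / 16) \<noteq> 0"
proof
  define m where "m = CARD('p) div 2"
  assume "poly (P1 :: 'p mod_ring poly) (1 / 16) = 0"
  hence "CARD('p) dvd (2 * m choose m)"
    using poly_P1_one_sixteenth[OF assms] of_nat_0_mod_ring_dvd unfolding m_def by metis
  hence "CARD('p) dvd fact (2 * m)"
    using binomial_fact_lemma[of m "2 * m"] by (metis dvd_mult le_add2 mult_2)
  hence "CARD('p) \<le> 2 * m" using prime_card prime_dvd_fact_iff by blast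
  thus False using odd_CARD_prime_card[OF assms] assms unfolding m_def by simp
qed

lemma gcd_P1_P2_dvd_mult_pderiv:
  assumes "CARD('p::prime_card) \<ge> 3"
  defines "g \<equiv> gcd (P1 :: 'p mod_ring poly) P2"
  shows "g dvd [:1, -16:] * [:0, 1:] * pderiv g"
proof -
  have "g dvd P1" "g dvd P2" unfolding g_def by simp_all
  have "[:1, -16:] * P1 + smult 2 ([:1, -16:] * [:0, 1:] * pderiv P1) = (P2 :: 'p mod_ring poly)"
    using P1_pderiv_eq[OF assms(1)] by (simp only: distrib_left mult_smult_right mult.assoc)
  hence "g dvd smult 2 ([:1, -16:] * [:0, 1:] * pderiv P1)"
    using \<open>g dvd P1\<close> \<open>g dvd P2\<close> by (metis add_diff_cancel_left' dvd_diff dvd_mult)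
  moreover have "smult 2 ([:1, -16:] * [:0, 1:] * pderiv P2) = [:1, -16:] * (P2 - P1 :: 'p mod_ring poly)"
    using arg_cong[OF P2_pderiv_eq, of "(*) [:1, -16:]"] by (simp add: mult.assoc)
  hence "g dvd smult 2 ([:1, -16:] * [:0, 1:] * pderiv P2)"
    using \<open>g dvd P1\<close> \<open>g dvd P2\<close> by (metis dvd_diff dvd_mult)
  ultimately show ?thesis
    unfolding g_def dvd_smult_iff[OF two_mod_ring_nonzero[OF assms(1)]] by (rule gcd_dvd_mult_pderiv_gcd)
qed

lemma gcd_P1_P2_dvd_pderiv:
  assumes "CARD('p::prime_card) \<ge> 3"
  defines "g \<equiv> gcd (P1 :: 'p mod_ring poly) P2"
  shows "g dvd pderiv g"
proof -
  obtain k where k: "P1 = g * k" unfolding g_def by (rule dvdE[OF gcd_dvd1])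
  have "poly P1 x = poly g x * poly k x" for x by (subst k) (rule poly_mult)
  hence "poly g 0 \<noteq> 0" "poly g (1 / 16) \<noteq> 0"
    using poly_P1_0 poly_P1_one_sixteenth_nonzero[OF assms(1)] by (metis mult_zero_left zero_neq_one)+
  hence "coprime g [:1, -16:]" "coprime g [:0, 1:]"
    using coprime_linear_poly_if_poly_nonzero[of "-16" g 1] coprime_linear_poly_if_poly_nonzero[of 1 g 0]
      sixteen_mod_ring_nonzero[OF assms(1)] by simp_all
  thus ?thesis
    using gcd_P1_P2_dvd_mult_pderiv[OF assms(1)] unfolding g_def mult.assoc
    by (simp only: coprime_dvd_mult_right_iff)
qed

theorem mainTheorem16:
  assumes "CARD('p::prime_card) \<ge> 3"
  shows "coprime (P1 :: 'p mod_ring poly) (P2 :: 'p mod_ring poly)"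
proof -
  define g where "g = gcd (P1 :: 'p mod_ring poly) P2"
  have "CHAR('p mod_ring) dvd degree g"
    using gcd_P1_P2_dvd_pderiv[OF assms] unfolding g_def
    by (intro char_dvd_degree_if_pderiv_eq_0 pderiv_eq_0_if_dvd_pderiv)
  hence "CARD('p) dvd degree g" by simp
  moreover have "(P1 :: 'p mod_ring poly) \<noteq> 0" using poly_P1_0[where 'p='p] by (metis poly_0 zero_neq_one)
  hence "degree g < CARD('p)"
    using dvd_imp_degree_le[of g P1] degree_P1_less[where 'p='p] unfolding g_def by fastforce
  ultimately have "degree g = 0" by (metis dvd_imp_le leD neq0_conv)
  with \<open>P1 \<noteq> 0\<close> have "is_unit g" unfolding g_def by (simp add: is_unit_iff_degree)
  thus ?thesis unfolding g_def using is_unit_gcd by blast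
qed

end
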